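(* For every integer $i\ge1$, with $N=4^i+1$, there are exactly $2^{i-1}$ pairs $(A,B)$ of antipalindromic numbers with $N=A/B$.
   Context: A positive integer $n$ is antipalindromic if its binary representation $w=w_1\cdots w_L$ (most significant digit first, no leading zeros) has even length $L$ and satisfies $w_i+w_{L+1-i}=1$ for all $i$. *)

theory Defs
  imports Complex_Main
begin

fun bin_digits :: "nat \<Rightarrow> nat list" where
  "bin_digits n = (if n = 0 then [] else bin_digits (n div 2) @ [n mod 2])"

declare bin_digits.simps [simp del]

definition antipalindromic :: "nat \<Rightarrow> bool" where
  "antipalindromic n \<longleftrightarrow> n > 0 \<and>
     (let w = bin_digits n; L = length w in
        even L \<and> (\<forall>i\<in>{1..L}. w ! (i - 1) + w ! (L - i) = 1))"

end

theory Submission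
  imports Defs "HOL-Library.Log_Nat"
begin

(* Let B have L binary digits and suppose that B and A = (2^m + 1) B = B 2^m + B are both
   antipalindromic, with m even. Size and parity force A to have L + m digits, and then L = m:
   if L < m, the mirror-image digits of A in positions L and m - 1 are both 0; if L > m, the
   symmetry of A makes its top digits those of B, so the middle block B mod 2^(L-m) + B div 2^m
   of A produces no carry and is itself antipalindromic, which contradicts the parities of the
   digits of B. Conversely B 2^m + B is antipalindromic whenever B is, with m digits. Hence the
   pairs are (B 2^(2i) + B, B) with B antipalindromic of 2i digits, and such a B is determined
   by its upper half, an arbitrary number with exactly i digits. *)

lemma not_bit_ge_exp_nat: "(x::nat) < 2 ^ k \<Longrightarrow> k \<le> j \<Longrightarrow> \<not> bit x j"
  by (metis bit_take_bit_iff not_le take_bit_nat_eq_self_iff)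

lemma exp_le_if_bit_nat: "bit (x::nat) k \<Longrightarrow> 2 ^ k \<le> x"
  using not_bit_ge_exp_nat not_le by blast

lemma bit_highest_nat: "2 ^ k \<le> (x::nat) \<Longrightarrow> x < 2 ^ Suc k \<Longrightarrow> bit x k"
  by (simp add: bit_iff_odd div_less_iff_less_mult le_div_geq)

lemma bit_div_exp_nat: "bit ((x::nat) div 2 ^ n) k = bit x (n + k)"
  by (simp add: bit_iff_odd div_exp_eq)

lemma bit_mult_exp_add_low_nat: "j < i \<Longrightarrow> bit (x * 2 ^ i + y) j = bit (y::nat) j"
proof -
  assume "j < i"
  have "take_bit i (x * 2 ^ i + y) = take_bit i y"
    by (simp add: take_bit_eq_mod)
  then show ?thesis
    using \<open>j < i\<close> by (metis bit_take_bit_iff)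
qed

lemma bit_mult_exp_add_nat:
  "(y::nat) < 2 ^ i \<Longrightarrow> bit (x * 2 ^ i + y) j = (if j < i then bit y j else bit x (j - i))"
proof -
  assume "y < 2 ^ i"
  then have "take_bit i (x * 2 ^ i + y) = y" and "drop_bit i (x * 2 ^ i + y) = x"
    by (simp_all add: take_bit_eq_mod drop_bit_eq_div)
  then show ?thesis
    by (metis bit_drop_bit_eq bit_take_bit_iff comp_apply le_add_diff_inverse not_less)
qed

lemma mult_exp_add_between_exp_iff:
  fixes x y :: nat
  assumes "y < 2 ^ k" and "0 < k"
  shows "2 ^ (2 * k - 1) \<le> x * 2 ^ k + y \<and> x * 2 ^ k + y < 2 ^ (2 * k) \<longleftrightarrow>
           2 ^ (k - 1) \<le> x \<and> x < 2 ^ k"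
proof -
  have quot: "(x * 2 ^ k + y) div 2 ^ k = x"
    using assms by simp
  have "(2::nat) ^ (2 * k - 1) = 2 ^ (k - 1) * 2 ^ k" and "(2::nat) ^ (2 * k) = 2 ^ k * 2 ^ k"
    using assms by (simp_all add: mult_2 flip: power_add)
  then show ?thesis
    using less_eq_div_iff_mult_less_eq[of "2 ^ k" "2 ^ (k - 1)" "x * 2 ^ k + y"]
      div_less_iff_less_mult[of "2 ^ k" "x * 2 ^ k + y" "2 ^ k"]
    by (simp only: quot) simp
qed

lemma all_less_double_mirror_iff:
  fixes k :: nat
  shows "(\<forall>j<2 * k. P j \<noteq> P (2 * k - 1 - j)) \<longleftrightarrow> (\<forall>j<k. P j \<noteq> P (2 * k - 1 - j))"
proof
  assume half: "\<forall>j<k. P j \<noteq> P (2 * k - 1 - j)"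
  show "\<forall>j<2 * k. P j \<noteq> P (2 * k - 1 - j)"
  proof (intro allI impI)
    fix j assume "j < 2 * k"
    then have "\<not> j < k \<Longrightarrow> 2 * k - 1 - j < k \<and> 2 * k - 1 - (2 * k - 1 - j) = j"
      by auto
    then show "P j \<noteq> P (2 * k - 1 - j)"
      using half[rule_format, of j] half[rule_format, of "2 * k - 1 - j"] by (cases "j < k") auto
  qed
qed auto

lemma mult_exp_add_self_div_exp_eq:
  "((x::nat) * 2 ^ m + x) div 2 ^ m = x div 2 ^ n * 2 ^ n + (x mod 2 ^ n + x div 2 ^ m)"
  using div_mult_mod_eq[of x "2 ^ n"] by simp

lemma exp_le_div_exp_nat: "2 ^ k \<le> (x::nat) \<Longrightarrow> m \<le> k \<Longrightarrow> 2 ^ (k - m) \<le> x div 2 ^ m"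
  by (simp add: less_eq_div_iff_mult_less_eq flip: power_add)

lemma real_eq_divide_iff_nat: "0 < b \<Longrightarrow> real c = real a / real b \<longleftrightarrow> a = c * b"
  by (simp add: eq_divide_eq eq_commute[of a] flip: of_nat_mult)

lemma bin_digits_eq_rev_bits:
  "bin_digits n = rev (map (\<lambda>j. of_bool (bit n j)) [0..<floorlog 2 n])"
proof (induction n rule: bin_digits.induct)
  case (1 n)
  show ?case
  proof (cases "n = 0")
    case False
    have "[0..<floorlog 2 n] = 0 # map Suc [0..<floorlog 2 (n div 2)]"
      using False by (subst compute_floorlog) (simp add: map_Suc_upt upt_conv_Cons)
    then show ?thesis
      using 1 False by (subst bin_digits.simps) (simp add: bit_Suc bit_0 odd_iff_mod_2_eq_one comp_def)
  qed (simp add: bin_digits.simps floorlog_def)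
qed

lemma length_bin_digits: "length (bin_digits n) = floorlog 2 n"
  by (simp add: bin_digits_eq_rev_bits)

lemma floorlog_2_eqI: "2 ^ (L - 1) \<le> n \<Longrightarrow> n < 2 ^ L \<Longrightarrow> floorlog 2 n = L"
  by (meson floorlog_geI floorlog_leI le_antisym le0 one_less_numeral_iff semiring_norm(76))

(* Digits are indexed from the least significant end: the w_i of the paper is bit n (L - i). *)
definition antipalindromic_len :: "nat \<Rightarrow> nat \<Rightarrow> bool" where
  "antipalindromic_len L n \<longleftrightarrow>
     even L \<and> 2 ^ (L - 1) \<le> n \<and> n < 2 ^ L \<and> (\<forall>j<L. bit n j \<noteq> bit n (L - 1 - j))"

lemma antipalindromic_len_floorlog: "antipalindromic_len L n \<Longrightarrow> floorlog 2 n = L"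
  unfolding antipalindromic_len_def by (blast intro: floorlog_2_eqI)

lemma antipalindromic_iff_len: "antipalindromic n \<longleftrightarrow> antipalindromic_len (floorlog 2 n) n"
proof -
  define L where "L = floorlog 2 n"
  have pos: "0 < n \<longleftrightarrow> 2 ^ (L - 1) \<le> n \<and> n < 2 ^ L"
    using floorlog_bounds[of n 2, folded L_def] by (auto intro!: gr0I)
  have "(\<forall>i\<in>{1..L}. bin_digits n ! (i - 1) + bin_digits n ! (L - i) = 1)
     \<longleftrightarrow> (\<forall>i\<in>{1..L}. of_bool (bit n (L - i)) + of_bool (bit n (i - 1)) = (1::nat))"
    unfolding bin_digits_eq_rev_bits L_def[symmetric]
    by (intro ball_cong) (auto simp: rev_nth Suc_diff_Suc)
  also have "\<dots> \<longleftrightarrow> (\<forall>j<L. bit n j \<noteq> bit n (L - 1 - j))"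
    unfolding image_Suc_lessThan[symmetric] by auto
  finally show ?thesis
    unfolding antipalindromic_def antipalindromic_len_def length_bin_digits L_def[symmetric] Let_def
    using pos by blast
qed

lemma antipalindromic_pos: "antipalindromic n \<Longrightarrow> 0 < n"
  by (simp add: antipalindromic_def)

lemma antipalindromic_iff_ex_len: "antipalindromic n \<longleftrightarrow> (\<exists>L. antipalindromic_len L n)"
  using antipalindromic_iff_len antipalindromic_len_floorlog by blast

lemma antipalindromic_lenD:
  assumes "antipalindromic_len L n"
  shows "even L" and "2 ^ (L - 1) \<le> n" and "n < 2 ^ L"
    and "\<And>j. j < L \<Longrightarrow> bit n j \<noteq> bit n (L - 1 - j)"
  using assms unfolding antipalindromic_len_def by blast+

lemma antipalindromic_len_pos: "antipalindromic_len L n \<Longrightarrow> 0 < L"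
  using antipalindromic_lenD(2,3)[of L n] by (cases L) auto

lemma antipalindromic_len_top_bit: "antipalindromic_len L n \<Longrightarrow> bit n (L - 1)"
  using antipalindromic_lenD(2,3)[of L n] antipalindromic_len_pos[of L n]
  by (intro bit_highest_nat) simp_all

lemma antipalindromic_len_not_bit_0: "antipalindromic_len L n \<Longrightarrow> \<not> bit n 0"
  using antipalindromic_lenD(4)[of L n 0] antipalindromic_len_pos[of L n]
    antipalindromic_len_top_bit[of L n] by simp

lemma antipalindromic_len_halves_iff:
  fixes x y :: nat
  assumes y: "y < 2 ^ k"
  shows "antipalindromic_len (2 * k) (x * 2 ^ k + y) \<longleftrightarrow>
           2 ^ (k - 1) \<le> x \<and> x < 2 ^ k \<and> (\<forall>j<k. bit y j \<noteq> bit x (k - 1 - j))"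
proof (cases "k = 0")
  case False
  let ?n = "x * 2 ^ k + y"
  have "bit ?n j \<noteq> bit ?n (2 * k - 1 - j) \<longleftrightarrow> bit y j \<noteq> bit x (k - 1 - j)" if "j < k" for j
  proof -
    have "\<not> 2 * k - 1 - j < k" and "2 * k - 1 - j - k = k - 1 - j"
      using that by auto
    then show ?thesis
      using that by (simp add: bit_mult_exp_add_nat[OF y])
  qed
  then have "(\<forall>j<2 * k. bit ?n j \<noteq> bit ?n (2 * k - 1 - j)) \<longleftrightarrow>
        (\<forall>j<k. bit y j \<noteq> bit x (k - 1 - j))"
    unfolding all_less_double_mirror_iff[where P = "bit ?n"] by auto
  then show ?thesis
    using mult_exp_add_between_exp_iff[OF y] False unfolding antipalindromic_len_def by auto
qed (auto simp: antipalindromic_len_def)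

lemma antipalindromic_len_double:
  "antipalindromic_len m B \<Longrightarrow> antipalindromic_len (2 * m) (B * 2 ^ m + B)"
  using antipalindromic_len_halves_iff[of B m B] unfolding antipalindromic_len_def by blast

(* The lower half of the antipalindrome with 2 k digits whose upper half is x. *)
definition mirror_complement :: "nat \<Rightarrow> nat \<Rightarrow> nat" where
  "mirror_complement k x = horner_sum of_bool 2 (map (\<lambda>j. \<not> bit x (k - 1 - j)) [0..<k])"

lemma mirror_complement_less: "mirror_complement k x < 2 ^ k"
  using horner_sum_of_bool_2_less[of "map (\<lambda>j. \<not> bit x (k - 1 - j)) [0..<k]"]
  unfolding mirror_complement_def by simp

lemma bit_mirror_complement_iff:
  "bit (mirror_complement k x) j \<longleftrightarrow> j < k \<and> \<not> bit x (k - 1 - j)"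
  unfolding mirror_complement_def by (auto simp: bit_horner_sum_bit_iff)

lemma antipalindromic_len_eq_image:
  "{n. antipalindromic_len (2 * k) n} =
     (\<lambda>x. x * 2 ^ k + mirror_complement k x) ` {2 ^ (k - 1)..<2 ^ k}"
proof (intro equalityI subsetI)
  fix n assume "n \<in> {n. antipalindromic_len (2 * k) n}"
  define x y where "x = n div 2 ^ k" and "y = n mod 2 ^ k"
  have n: "n = x * 2 ^ k + y" and y: "y < 2 ^ k"
    unfolding x_def y_def by (simp_all only: div_mult_mod_eq) simp
  with \<open>n \<in> _\<close> have x: "2 ^ (k - 1) \<le> x" "x < 2 ^ k" and
    mirror: "\<forall>j<k. bit y j \<noteq> bit x (k - 1 - j)"
    using antipalindromic_len_halves_iff[OF y, of x] by auto
  have "y = mirror_complement k x"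
  proof (rule bit_eqI)
    fix j show "bit y j \<longleftrightarrow> bit (mirror_complement k x) j"
      using mirror not_bit_ge_exp_nat[OF y, of j]
      by (cases "j < k") (auto simp: bit_mirror_complement_iff)
  qed
  with n x show "n \<in> (\<lambda>x. x * 2 ^ k + mirror_complement k x) ` {2 ^ (k - 1)..<2 ^ k}"
    by (intro image_eqI[of _ _ x]) simp_all
next
  fix n assume "n \<in> (\<lambda>x. x * 2 ^ k + mirror_complement k x) ` {2 ^ (k - 1)..<2 ^ k}"
  then obtain x where "n = x * 2 ^ k + mirror_complement k x" "2 ^ (k - 1) \<le> x" "x < 2 ^ k"
    by auto
  then show "n \<in> {n. antipalindromic_len (2 * k) n}"
    using antipalindromic_len_halves_iff[OF mirror_complement_less, of k x]
    by (simp add: bit_mirror_complement_iff)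
qed

lemma card_antipalindromic_len:
  assumes "0 < k"
  shows "card {n. antipalindromic_len (2 * k) n} = 2 ^ (k - 1)"
proof -
  have "inj_on (\<lambda>x. x * 2 ^ k + mirror_complement k x) {2 ^ (k - 1)..<2 ^ k}"
  proof (rule inj_onI)
    fix x x' assume "x * 2 ^ k + mirror_complement k x = x' * 2 ^ k + mirror_complement k x'"
    then have "(x * 2 ^ k + mirror_complement k x) div 2 ^ k
             = (x' * 2 ^ k + mirror_complement k x') div 2 ^ k" by simp
    then show "x = x'" by (simp add: mirror_complement_less)
  qed
  then have "card {n. antipalindromic_len (2 * k) n} = 2 ^ k - 2 ^ (k - 1)"
    by (simp add: antipalindromic_len_eq_image card_image)
  also have "\<dots> = 2 ^ (k - 1)"
    using assms by (cases k) simp_all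
  finally show ?thesis .
qed

lemma antipalindromic_len_mult_exp_add_self_length:
  assumes B: "antipalindromic_len L B" and A: "antipalindromic_len LA (B * 2 ^ m + B)"
    and "even m"
  shows "LA = L + m"
proof -
  note bounds = antipalindromic_lenD(2,3)[OF B]
  have "(2::nat) ^ (L + m - 1) = 2 ^ (L - 1) * 2 ^ m"
    using antipalindromic_len_pos[OF B] by (simp flip: power_add)
  also have "\<dots> \<le> B * 2 ^ m + B"
    using bounds by (simp add: trans_le_add1)
  finally have "L + m \<le> LA"
    using floorlog_geI[of 2 "L + m" "B * 2 ^ m + B"] antipalindromic_len_floorlog[OF A] by simp
  have "B * 2 ^ m < 2 ^ (L + m)" and "B < 2 ^ (L + m)"
    using bounds by (simp_all add: power_add order.strict_trans2)
  then have "B * 2 ^ m + B < 2 ^ Suc (L + m)"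
    by simp
  then have "LA \<le> Suc (L + m)"
    using floorlog_leI[of "B * 2 ^ m + B" 2 "Suc (L + m)"] antipalindromic_len_floorlog[OF A] by simp
  with \<open>L + m \<le> LA\<close> show ?thesis
    using antipalindromic_lenD(1)[OF A] antipalindromic_lenD(1)[OF B] \<open>even m\<close> by presburger
qed

lemma antipalindromic_len_mult_exp_add_self_not_less:
  assumes B: "antipalindromic_len L B" and A: "antipalindromic_len (L + m) (B * 2 ^ m + B)"
  shows "\<not> L < m"
proof
  assume "L < m"
  have "\<not> bit B L" and "\<not> bit B (m - 1)"
    using not_bit_ge_exp_nat[OF antipalindromic_lenD(3)[OF B]] \<open>L < m\<close> by simp_all
  then have "\<not> bit (B * 2 ^ m + B) L" and "\<not> bit (B * 2 ^ m + B) (m - 1)"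
    using bit_mult_exp_add_low_nat \<open>L < m\<close> by simp_all
  moreover have "bit (B * 2 ^ m + B) L \<noteq> bit (B * 2 ^ m + B) (L + m - 1 - L)"
    using antipalindromic_lenD(4)[OF A, of L] \<open>L < m\<close> by simp
  ultimately show False
    by simp
qed

lemma antipalindromic_len_mult_exp_add_self_high:
  assumes B: "antipalindromic_len L B" and A: "antipalindromic_len (L + m) (B * 2 ^ m + B)"
    and "m \<le> L"
  shows "(B * 2 ^ m + B) div 2 ^ L = B div 2 ^ (L - m)"
proof (rule bit_eqI)
  fix k
  let ?A = "B * 2 ^ m + B"
  show "bit (?A div 2 ^ L) k \<longleftrightarrow> bit (B div 2 ^ (L - m)) k"
  proof (cases "k < m")
    case True
    have "bit ?A (L + k) \<noteq> bit ?A (L + m - 1 - (L + k))"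
      using antipalindromic_lenD(4)[OF A, of "L + k"] True by simp
    moreover have "L + m - 1 - (L + k) = m - 1 - k"
      by simp
    moreover have "bit ?A (m - 1 - k) = bit B (m - 1 - k)"
      using bit_mult_exp_add_low_nat True by simp
    moreover have "bit B (m - 1 - k) \<noteq> bit B (L - 1 - (m - 1 - k))"
      using antipalindromic_lenD(4)[OF B, of "m - 1 - k"] True \<open>m \<le> L\<close> by simp
    moreover have "L - 1 - (m - 1 - k) = L - m + k"
      using True \<open>m \<le> L\<close> by simp
    ultimately show ?thesis
      by (simp add: bit_div_exp_nat)
  next
    case False
    then show ?thesis
      using not_bit_ge_exp_nat[OF antipalindromic_lenD(3)[OF A], of "L + k"]
        not_bit_ge_exp_nat[OF antipalindromic_lenD(3)[OF B], of "L - m + k"] \<open>m \<le> L\<close>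
      by (simp add: bit_div_exp_nat)
  qed
qed

lemma antipalindromic_len_mult_exp_add_self_no_carry:
  assumes B: "antipalindromic_len L B" and A: "antipalindromic_len (L + m) (B * 2 ^ m + B)"
    and "m < L"
  shows "B mod 2 ^ (L - m) + B div 2 ^ m < 2 ^ (L - m)"
proof -
  let ?A = "B * 2 ^ m + B" and ?n = "L - m"
  have "B div 2 ^ ?n = ?A div 2 ^ L"
    using antipalindromic_len_mult_exp_add_self_high[OF B A] \<open>m < L\<close> by simp
  also have "\<dots> = ?A div 2 ^ m div 2 ^ ?n"
    using \<open>m < L\<close> by (simp only: div_exp_eq) simp
  also have "\<dots> = B div 2 ^ ?n + (B mod 2 ^ ?n + B div 2 ^ m) div 2 ^ ?n"
    by (simp only: mult_exp_add_self_div_exp_eq[of B m ?n]) simp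
  finally show ?thesis
    by (simp add: div_eq_0_iff)
qed

lemma antipalindromic_len_mult_exp_add_self_middle:
  assumes B: "antipalindromic_len L B" and A: "antipalindromic_len (L + m) (B * 2 ^ m + B)"
    and "m < L"
  shows "antipalindromic_len (L - m) (B mod 2 ^ (L - m) + B div 2 ^ m)"
proof -
  let ?A = "B * 2 ^ m + B" and ?n = "L - m" and ?F = "B mod 2 ^ (L - m) + B div 2 ^ m"
  have F: "?F < 2 ^ ?n"
    using antipalindromic_len_mult_exp_add_self_no_carry[OF B A \<open>m < L\<close>] .
  have bit_F: "bit ?F j = bit ?A (m + j)" if "j < ?n" for j
    using bit_mult_exp_add_nat[OF F, of "B div 2 ^ ?n" j] that
    by (simp only: mult_exp_add_self_div_exp_eq[symmetric] bit_div_exp_nat) simp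
  show ?thesis
    unfolding antipalindromic_len_def
  proof (intro conjI allI impI)
    show "even ?n"
      using antipalindromic_lenD(1)[OF A] antipalindromic_lenD(1)[OF B] by simp
    have "m \<le> L - 1"
      using \<open>m < L\<close> by simp
    then have "2 ^ (L - 1 - m) \<le> B div 2 ^ m"
      by (rule exp_le_div_exp_nat[OF antipalindromic_lenD(2)[OF B]])
    then show "2 ^ (?n - 1) \<le> ?F"
      by (simp add: diff_commute trans_le_add2)
    fix j assume "j < ?n"
    have "bit ?A (m + j) \<noteq> bit ?A (L + m - 1 - (m + j))"
      using antipalindromic_lenD(4)[OF A, of "m + j"] \<open>j < ?n\<close> by simp
    moreover have "L + m - 1 - (m + j) = m + (?n - 1 - j)"
      using \<open>j < ?n\<close> by simp
    ultimately show "bit ?F j \<noteq> bit ?F (?n - 1 - j)"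
      using bit_F[of j] bit_F[of "?n - 1 - j"] \<open>j < ?n\<close> by simp
  qed (use F in simp)
qed

lemma antipalindromic_len_mult_exp_add_self_not_greater:
  assumes B: "antipalindromic_len L B" and A: "antipalindromic_len (L + m) (B * 2 ^ m + B)"
  shows "\<not> m < L"
proof
  assume "m < L"
  define n E D where "n = L - m" and "E = B mod 2 ^ n" and "D = B div 2 ^ m"
  have F: "antipalindromic_len n (E + D)"
    using antipalindromic_len_mult_exp_add_self_middle[OF B A \<open>m < L\<close>] unfolding n_def E_def D_def .
  have "0 < n" and L: "L = m + n"
    using \<open>m < L\<close> unfolding n_def by simp_all
  have "m \<le> L - 1"
    using \<open>m < L\<close> by simp
  then have "2 ^ (n - 1) \<le> D"
    using exp_le_div_exp_nat[OF antipalindromic_lenD(2)[OF B]] unfolding n_def D_def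
    by (simp add: diff_commute)
  have "even (E + D)"
    using antipalindromic_len_not_bit_0[OF F] by (simp add: bit_0)
  moreover have "even E"
    using antipalindromic_len_not_bit_0[OF B] \<open>0 < n\<close>
    unfolding E_def by (simp add: bit_0 flip: take_bit_eq_mod)
  ultimately have "\<not> bit B m"
    using bit_div_exp_nat[of B m 0] unfolding D_def by (simp add: bit_0)
  then have "bit B (n - 1)"
    using antipalindromic_lenD(4)[OF B, of "n - 1"] \<open>0 < n\<close> by (simp add: L)
  then have "2 ^ (n - 1) \<le> E"
    using \<open>0 < n\<close> unfolding E_def
    by (intro exp_le_if_bit_nat) (simp add: bit_take_bit_iff flip: take_bit_eq_mod)
  with \<open>2 ^ (n - 1) \<le> D\<close> antipalindromic_lenD(3)[OF F] \<open>0 < n\<close> show False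
    by (cases n) simp_all
qed

lemma antipalindromic_len_mult_exp_add_self:
  assumes "antipalindromic_len L B" and "antipalindromic_len LA (B * 2 ^ m + B)" and "even m"
  shows "L = m"
proof -
  have "antipalindromic_len (L + m) (B * 2 ^ m + B)"
    using assms antipalindromic_len_mult_exp_add_self_length by metis
  then show ?thesis
    using assms(1) antipalindromic_len_mult_exp_add_self_not_less
      antipalindromic_len_mult_exp_add_self_not_greater by (meson linorder_neqE_nat)
qed

lemma antipalindromic_mult_exp_add_self_iff:
  assumes "even m"
  shows "antipalindromic (B * 2 ^ m + B) \<and> antipalindromic B \<longleftrightarrow> antipalindromic_len m B"
  using antipalindromic_len_mult_exp_add_self[OF _ _ assms] antipalindromic_len_double
    antipalindromic_iff_ex_len by metis

theorem theorem21:
  fixes i :: nat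
  assumes "i \<ge> 1"
  shows "card {(A, B). antipalindromic A \<and> antipalindromic B \<and>
                 real (4 ^ i + 1) = real A / real B} = 2 ^ (i - 1)"
proof -
  have four: "(4::nat) ^ i = 2 ^ (2 * i)"
    by (simp add: power_mult)
  have ratio: "real (4 ^ i + 1) = real A / real B \<longleftrightarrow> A = B * 2 ^ (2 * i) + B"
    if "antipalindromic B" for A B
    using real_eq_divide_iff_nat[of B "4 ^ i + 1" A, OF antipalindromic_pos[OF that]]
    unfolding four by (simp add: algebra_simps)
  have "{(A, B). antipalindromic A \<and> antipalindromic B \<and> real (4 ^ i + 1) = real A / real B}
      = {(A, B). antipalindromic A \<and> antipalindromic B \<and> A = B * 2 ^ (2 * i) + B}"
    using ratio by (intro Collect_cong) (auto simp del: of_nat_add of_nat_power)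
  also have "\<dots> = (\<lambda>B. (B * 2 ^ (2 * i) + B, B)) `
          {B. antipalindromic (B * 2 ^ (2 * i) + B) \<and> antipalindromic B}"
    by auto
  also have "\<dots> = (\<lambda>B. (B * 2 ^ (2 * i) + B, B)) ` {B. antipalindromic_len (2 * i) B}"
    using antipalindromic_mult_exp_add_self_iff[of "2 * i"] by simp
  moreover have "inj (\<lambda>B::nat. (B * 2 ^ (2 * i) + B, B))"
    by (rule injI) simp
  ultimately show ?thesis
    using card_antipalindromic_len assms by (simp add: card_image inj_on_subset)
qed

end
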